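(* Consider two sets of matrices $\mathbf{A}_1, \dots, \mathbf{A}_s$ and $\hat{\mathbf{A}}_1, \dots, \hat{\mathbf{A}}_s$ with $\|\mathbf{A}_i - \hat{\mathbf{A}}_i\| \leq \epsilon_{\mathbf{A}}$ for all $i \in [s]$. Assume there exists a pair $\{\xi, \kappa\}$ such that for all $t \in \mathbb{N}$, $\max_{\sigma_{1:t} \in [s]^{t}}\|\mathbf{A}_{\sigma_1} \cdots \mathbf{A}_{\sigma_t}\| \leq \kappa \xi^t$. Then, for all $t$ and any sequence $\sigma_{1:t} \in [s]^{t}$, we have (i) $\|\prod_{h=1}^t \hat{\mathbf{A}}_{\sigma_h}\| \leq \kappa (\kappa \epsilon_{\mathbf{A}} + \xi)^t$; (ii) $\|\prod_{h=1}^t \hat{\mathbf{A}}_{\sigma_h} - \prod_{h=1}^t \mathbf{A}_{\sigma_h}\| \leq \kappa^2 t (\kappa \epsilon_{\mathbf{A}} + \xi)^{t-1} \epsilon_{\mathbf{A}}$. *)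

theory Defs
  imports "HOL-Analysis.Analysis"
begin

definition mnorm :: "real^'n^'n \<Rightarrow> real" where
  "mnorm M = onorm (\<lambda>x. M *v x)"

fun mprod :: "(nat \<Rightarrow> real^'n^'n) \<Rightarrow> (nat \<Rightarrow> nat) \<Rightarrow> nat \<Rightarrow> real^'n^'n" where
  "mprod A \<sigma> 0 = mat 1"
| "mprod A \<sigma> (Suc t) = mprod A \<sigma> t ** A (\<sigma> (Suc t))"

end

theory Submission
  imports Defs
begin

text \<open>
  Write \<open>c = \<kappa> \<epsilon> + \<xi>\<close>. The difference of the two products telescopes into a sum over
  \<open>h < t\<close> of (first \<open>h\<close> perturbed factors) (perturbed minus original factor \<open>h + 1\<close>)
  (last \<open>t - h - 1\<close> original factors), and the last block is again a product of the stable
  family, of norm at most \<open>\<kappa> \<xi>^(t - h - 1)\<close>. Bounding the first block by (i) for shorter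
  words, strong induction on \<open>t\<close> yields (i) through the identity
  \<open>\<kappa> \<epsilon> (\<Sum>h<t. c^h \<xi>^(t - h - 1)) = c^t - \<xi>^t\<close>; bounding each summand by \<open>c^(t - 1)\<close>
  instead yields (ii).
\<close>

lemma mnorm_nonneg: "0 \<le> mnorm M"
  unfolding mnorm_def by (rule onorm_pos_le) simp

lemma mnorm_matrix_mul_le: "mnorm (X ** Y) \<le> mnorm X * mnorm Y"
proof -
  have "(\<lambda>x. (X ** Y) *v x) = (\<lambda>x. X *v x) \<circ> (\<lambda>x. Y *v x)"
    by (auto simp: matrix_vector_mul_assoc)
  then show ?thesis
    unfolding mnorm_def by (metis onorm_compose matrix_vector_mul_bounded_linear)
qed

lemma mnorm_add_le: "mnorm (X + Y) \<le> mnorm X + mnorm Y"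
proof -
  have "(\<lambda>x. (X + Y) *v x) = (\<lambda>x. X *v x + Y *v x)"
    by (auto simp: matrix_vector_mult_add_rdistrib)
  then show ?thesis
    unfolding mnorm_def by (metis onorm_triangle matrix_vector_mul_bounded_linear)
qed

lemma mnorm_0: "mnorm (0 :: real^'n^'n) = 0"
proof -
  have "(*v) (0 :: real^'n^'n) = (\<lambda>x. 0)"
    by (rule ext) simp
  then show ?thesis
    unfolding mnorm_def by (simp add: onorm_zero)
qed

lemma mnorm_mat_1: "mnorm (mat 1 :: real^'n^'n) = 1"
proof -
  have "(*v) (mat 1 :: real^'n^'n) = (\<lambda>x. x)"
    by (rule ext) simp
  then show ?thesis
    unfolding mnorm_def by (simp add: onorm_id)
qed

lemma mnorm_sum_le: "mnorm (\<Sum>h\<in>S. f h) \<le> (\<Sum>h\<in>S. mnorm (f h))"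
  by (induction S rule: infinite_finite_induct)
    (auto simp: mnorm_0 intro: order_trans[OF mnorm_add_le])

lemma mnorm_minus_commute: "mnorm (X - Y) = mnorm (Y - X)"
proof -
  have "(\<lambda>x. (X - Y) *v x) = (\<lambda>x. - ((Y - X) *v x))"
    by (auto simp: matrix_vector_mult_diff_rdistrib)
  then show ?thesis
    unfolding mnorm_def by (simp add: onorm_neg)
qed

lemma matrix_diff_ldistrib: "(A::'a::ring_1^'n^'m) ** (B - C) = A ** B - A ** C"
  by (simp add: vec_eq_iff matrix_matrix_mult_def sum_subtractf algebra_simps)

lemma matrix_diff_rdistrib: "((A::'a::ring_1^'n^'m) - B) ** C = A ** C - B ** C"
  by (simp add: vec_eq_iff matrix_matrix_mult_def sum_subtractf algebra_simps)

lemma matrix_sum_rdistrib: "(\<Sum>h\<in>S. f h :: 'a::semiring_1^'n^'m) ** C = (\<Sum>h\<in>S. f h ** C)"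
  by (induction S rule: infinite_finite_induct)
    (simp_all add: vec_eq_iff matrix_matrix_mult_def sum.distrib algebra_simps)

lemma mprod_Suc_shift:
  assumes "h < t"
  shows "mprod A (\<lambda>j. \<sigma> (j + Suc h)) (t - Suc h) ** A (\<sigma> (Suc t))
           = mprod A (\<lambda>j. \<sigma> (j + Suc h)) (Suc t - Suc h)"
proof -
  have "Suc t - Suc h = Suc (t - Suc h)" and "Suc (t - Suc h + Suc h) = Suc t"
    using assms by simp_all
  then show ?thesis by simp
qed

lemma mprod_diff_telescope:
  "mprod Ahat \<sigma> t - mprod A \<sigma> t =
     (\<Sum>h<t. mprod Ahat \<sigma> h ** (Ahat (\<sigma> (Suc h)) - A (\<sigma> (Suc h)))
              ** mprod A (\<lambda>j. \<sigma> (j + Suc h)) (t - Suc h))"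
proof (induction t)
  case 0
  show ?case by simp
next
  case (Suc t)
  have "mprod Ahat \<sigma> (Suc t) - mprod A \<sigma> (Suc t) =
          (mprod Ahat \<sigma> t - mprod A \<sigma> t) ** A (\<sigma> (Suc t))
          + mprod Ahat \<sigma> t ** (Ahat (\<sigma> (Suc t)) - A (\<sigma> (Suc t)))"
    by (simp add: matrix_diff_ldistrib matrix_diff_rdistrib)
  also have "(mprod Ahat \<sigma> t - mprod A \<sigma> t) ** A (\<sigma> (Suc t)) =
          (\<Sum>h<t. mprod Ahat \<sigma> h ** (Ahat (\<sigma> (Suc h)) - A (\<sigma> (Suc h)))
                   ** mprod A (\<lambda>j. \<sigma> (j + Suc h)) (Suc t - Suc h))"
    unfolding Suc.IH matrix_sum_rdistrib
    by (intro sum.cong refl) (simp only: mprod_Suc_shift lessThan_iff flip: matrix_mul_assoc)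
  finally show ?case by simp
qed

lemma mnorm_mprod_diff_le_sum:
  assumes prefix: "\<And>h. h < t \<Longrightarrow> mnorm (mprod Ahat \<sigma> h) \<le> a h"
    and step: "\<And>h. h < t \<Longrightarrow> mnorm (Ahat (\<sigma> (Suc h)) - A (\<sigma> (Suc h))) \<le> \<epsilon>"
    and suffix: "\<And>h. h < t \<Longrightarrow> mnorm (mprod A (\<lambda>j. \<sigma> (j + Suc h)) (t - Suc h)) \<le> b h"
  shows "mnorm (mprod Ahat \<sigma> t - mprod A \<sigma> t) \<le> \<epsilon> * (\<Sum>h<t. a h * b h)"
proof -
  have "mnorm (mprod Ahat \<sigma> t - mprod A \<sigma> t) \<le>
          (\<Sum>h<t. mnorm (mprod Ahat \<sigma> h ** (Ahat (\<sigma> (Suc h)) - A (\<sigma> (Suc h)))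
                          ** mprod A (\<lambda>j. \<sigma> (j + Suc h)) (t - Suc h)))"
    unfolding mprod_diff_telescope by (rule mnorm_sum_le)
  also have "\<dots> \<le> (\<Sum>h<t. a h * \<epsilon> * b h)"
  proof (rule sum_mono)
    fix h assume "h \<in> {..<t}"
    then have "h < t" by simp
    let ?P = "mprod Ahat \<sigma> h" and ?D = "Ahat (\<sigma> (Suc h)) - A (\<sigma> (Suc h))"
      and ?Q = "mprod A (\<lambda>j. \<sigma> (j + Suc h)) (t - Suc h)"
    have "mnorm (?P ** ?D ** ?Q) \<le> mnorm ?P * mnorm ?D * mnorm ?Q"
      by (meson mnorm_matrix_mul_le mnorm_nonneg mult_right_mono order_trans)
    also have "\<dots> \<le> a h * \<epsilon> * b h"
      using prefix[OF \<open>h < t\<close>] step[OF \<open>h < t\<close>] suffix[OF \<open>h < t\<close>]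
      by (intro mult_mono mnorm_nonneg mult_nonneg_nonneg) (auto intro: order_trans[OF mnorm_nonneg])
    finally show "mnorm (?P ** ?D ** ?Q) \<le> a h * \<epsilon> * b h" .
  qed
  also have "\<dots> = \<epsilon> * (\<Sum>h<t. a h * b h)"
    by (simp add: sum_distrib_left algebra_simps)
  finally show ?thesis .
qed

lemma sum_power_mult_power_le:
  fixes x y :: real
  assumes "0 \<le> x" "x \<le> y"
  shows "(\<Sum>h<t. y ^ h * x ^ (t - Suc h)) \<le> real t * y ^ (t - 1)"
proof -
  have "y ^ h * x ^ (t - Suc h) \<le> y ^ (t - 1)" if "h < t" for h
  proof -
    have "y ^ h * x ^ (t - Suc h) \<le> y ^ h * y ^ (t - Suc h)"
      using assms by (intro mult_left_mono power_mono) auto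
    also have "\<dots> = y ^ (t - 1)"
      using that by (simp flip: power_add)
    finally show ?thesis .
  qed
  then have "(\<Sum>h<t. y ^ h * x ^ (t - Suc h)) \<le> (\<Sum>h<t. y ^ (t - 1))"
    by (intro sum_mono) simp
  then show ?thesis by simp
qed

lemma word_suffix:
  fixes t k :: nat
  assumes "\<forall>h\<in>{1..t}. \<sigma> h \<in> S"
  shows "\<forall>h\<in>{1..t - k}. \<sigma> (h + k) \<in> S"
proof
  fix h assume "h \<in> {1..t - k}"
  then have "h + k \<in> {1..t}" by auto
  with assms show "\<sigma> (h + k) \<in> S" by blast
qed

context
  fixes A Ahat :: "nat \<Rightarrow> real^'n^'n" and s :: nat and \<epsilon> \<kappa> \<xi> :: real
  assumes close: "\<forall>i\<in>{1..s}. mnorm (A i - Ahat i) \<le> \<epsilon>"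
    and stable: "\<forall>t::nat. \<forall>\<sigma>. (\<forall>h\<in>{1..t}. \<sigma> h \<in> {1..s}) \<longrightarrow>
                    mnorm (mprod A \<sigma> t) \<le> \<kappa> * \<xi> ^ t"
begin

lemma one_le_kappa: "1 \<le> \<kappa>"
  using stable[rule_format, of 0 "\<lambda>_. 1"] by (simp add: mnorm_mat_1)

lemma mnorm_letter_diff_le:
  assumes "\<forall>h\<in>{1..t}. \<sigma> h \<in> {1..s}" "h < t"
  shows "mnorm (Ahat (\<sigma> (Suc h)) - A (\<sigma> (Suc h))) \<le> \<epsilon>"
proof -
  have "\<sigma> (Suc h) \<in> {1..s}"
    using assms by simp
  with close show ?thesis
    by (simp add: mnorm_minus_commute)
qed

lemma mnorm_mprod_suffix_le:
  assumes "\<forall>h\<in>{1..t}. \<sigma> h \<in> {1..s}"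
  shows "mnorm (mprod A (\<lambda>j. \<sigma> (j + k)) (t - k)) \<le> \<kappa> * \<xi> ^ (t - k)"
  using word_suffix[OF assms] by (intro stable[rule_format]) simp

lemma nonneg_if_nonempty_word:
  fixes t :: nat
  assumes "\<forall>h\<in>{1..t}. \<sigma> h \<in> {1..s}" "0 < t"
  shows "0 \<le> \<epsilon>" "0 \<le> \<xi>"
proof -
  show "0 \<le> \<epsilon>"
    using mnorm_letter_diff_le[OF assms] by (rule order_trans[OF mnorm_nonneg])
  have "0 \<le> \<kappa> * \<xi> ^ (t - (t - 1))"
    using mnorm_mprod_suffix_le[OF assms(1)] by (rule order_trans[OF mnorm_nonneg])
  then have "0 \<le> \<kappa> * \<xi>"
    using assms(2) by simp
  with one_le_kappa show "0 \<le> \<xi>"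
    by (simp add: zero_le_mult_iff)
qed

lemma mnorm_mprod_diff_le_power_sum:
  assumes word: "\<forall>h\<in>{1..t}. \<sigma> h \<in> {1..s}"
    and prefix: "\<And>h. h < t \<Longrightarrow> mnorm (mprod Ahat \<sigma> h) \<le> \<kappa> * c ^ h"
  shows "mnorm (mprod Ahat \<sigma> t - mprod A \<sigma> t)
           \<le> \<kappa>\<^sup>2 * \<epsilon> * (\<Sum>h<t. c ^ h * \<xi> ^ (t - Suc h))"
proof -
  have "mnorm (mprod Ahat \<sigma> t - mprod A \<sigma> t)
          \<le> \<epsilon> * (\<Sum>h<t. (\<kappa> * c ^ h) * (\<kappa> * \<xi> ^ (t - Suc h)))"
    using prefix mnorm_letter_diff_le[OF word] mnorm_mprod_suffix_le[OF word]
    by (rule mnorm_mprod_diff_le_sum)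
  then show ?thesis
    by (simp add: sum_distrib_left power2_eq_square algebra_simps)
qed

lemma mnorm_mprod_perturbed_le:
  assumes "\<forall>h\<in>{1..t}. \<sigma> h \<in> {1..s}"
  shows "mnorm (mprod Ahat \<sigma> t) \<le> \<kappa> * (\<kappa> * \<epsilon> + \<xi>) ^ t"
  using assms
proof (induction t rule: less_induct)
  case (less t)
  define c where "c = \<kappa> * \<epsilon> + \<xi>"
  have prefix: "mnorm (mprod Ahat \<sigma> h) \<le> \<kappa> * c ^ h" if "h < t" for h
    using less that unfolding c_def by fastforce
  have "mnorm (mprod Ahat \<sigma> t) \<le> mnorm (mprod A \<sigma> t) + mnorm (mprod Ahat \<sigma> t - mprod A \<sigma> t)"
    using mnorm_add_le[of "mprod A \<sigma> t" "mprod Ahat \<sigma> t - mprod A \<sigma> t"] by simp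
  also have "\<dots> \<le> \<kappa> * \<xi> ^ t + \<kappa>\<^sup>2 * \<epsilon> * (\<Sum>h<t. c ^ h * \<xi> ^ (t - Suc h))"
    using stable less.prems mnorm_mprod_diff_le_power_sum[OF less.prems prefix]
    by (intro add_mono) auto
  also have "\<dots> = \<kappa> * c ^ t"
  proof -
    have "c ^ t - \<xi> ^ t = (c - \<xi>) * (\<Sum>h<t. \<xi> ^ (t - Suc h) * c ^ h)"
      by (rule power_diff_sumr2)
    then show ?thesis
      by (simp add: c_def power2_eq_square algebra_simps)
  qed
  finally show ?case
    unfolding c_def .
qed

lemma mnorm_mprod_perturbed_diff_le:
  assumes word: "\<forall>h\<in>{1..t}. \<sigma> h \<in> {1..s}"
  shows "mnorm (mprod Ahat \<sigma> t - mprod A \<sigma> t)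
           \<le> \<kappa>\<^sup>2 * real t * (\<kappa> * \<epsilon> + \<xi>) ^ (t - 1) * \<epsilon>"
proof (cases "t = 0")
  case True
  then show ?thesis by (simp add: mnorm_0)
next
  case False
  then have eps: "0 \<le> \<epsilon>" and xi: "0 \<le> \<xi>"
    using nonneg_if_nonempty_word[OF word] by auto
  have "mnorm (mprod Ahat \<sigma> t - mprod A \<sigma> t)
          \<le> \<kappa>\<^sup>2 * \<epsilon> * (\<Sum>h<t. (\<kappa> * \<epsilon> + \<xi>) ^ h * \<xi> ^ (t - Suc h))"
    using word by (intro mnorm_mprod_diff_le_power_sum mnorm_mprod_perturbed_le) auto
  also have "\<dots> \<le> \<kappa>\<^sup>2 * \<epsilon> * (real t * (\<kappa> * \<epsilon> + \<xi>) ^ (t - 1))"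
    using eps xi one_le_kappa
    by (intro mult_left_mono sum_power_mult_power_le) auto
  finally show ?thesis
    by (simp add: algebra_simps)
qed

end

theorem lemma10:
  fixes A Ahat :: "nat \<Rightarrow> real^'n^'n" and s :: nat and \<epsilon> \<kappa> \<xi> :: real
  assumes close: "\<forall>i\<in>{1..s}. mnorm (A i - Ahat i) \<le> \<epsilon>"
    and stable: "\<forall>t::nat. \<forall>\<sigma>. (\<forall>h\<in>{1..t}. \<sigma> h \<in> {1..s}) \<longrightarrow>
                    mnorm (mprod A \<sigma> t) \<le> \<kappa> * \<xi> ^ t"
  shows "\<forall>t::nat. \<forall>\<sigma>. (\<forall>h\<in>{1..t}. \<sigma> h \<in> {1..s}) \<longrightarrow>
           mnorm (mprod Ahat \<sigma> t) \<le> \<kappa> * (\<kappa> * \<epsilon> + \<xi>) ^ t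
         \<and> mnorm (mprod Ahat \<sigma> t - mprod A \<sigma> t)
             \<le> \<kappa>^2 * real t * (\<kappa> * \<epsilon> + \<xi>) ^ (t - 1) * \<epsilon>"
  using mnorm_mprod_perturbed_le[OF close stable] mnorm_mprod_perturbed_diff_le[OF close stable]
  by blast

end
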